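(* Let $\lambda>0$ and let $(\beta_n)_{n\geq0}$ be a sequence with $0<\beta_n\leq1$. Consider the system (governing the state probabilities of the state dependent time fractional Poisson process-II) $$p^{\beta_n}(n,t)=p^{\beta_n}(n,0)-\lambda\big(I_t^{\beta_n}p^{\beta_n}(n,t)-I_t^{\beta_{n-1}}p^{\beta_{n-1}}(n-1,t)\big),\qquad n\geq 0,\ t\ge0,$$ with $p^{\beta_{-1}}(-1,t)=0$ for $t\ge0$, $p^{\beta_0}(0,0)=1$ and $p^{\beta_n}(n,0)=0$ for $n\geq 1$. The solution of this system is given by $$p^{\beta_n}(n,t)=(-1)^n\sum_{k=n}^{\infty}(-\lambda)^k\sum_{\Omega^k_n}\frac{t^{\sum_{j=0}^nk_j\beta_j}}{\Gamma\big(1+\sum_{j=0}^nk_j\beta_j\big)},\qquad n\geq0,$$ where $\Omega^k_n=\{(k_0,k_1,\ldots,k_n):\ \sum_{j=0}^nk_j=k,\ k_n\in\mathbb{N}_0,\ k_j\in\mathbb{N}_0\setminus\{0\} \text{ for } 0\leq j\leq n-1\}$.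
   Context: $\mathbb{N}_0$ denotes the set of nonnegative integers. For $\beta>0$, $I_t^{\beta}$ is the Riemann-Liouville fractional integral $I_t^{\beta}f(t)=\frac{1}{\Gamma(\beta)}\int_0^t (t-s)^{\beta-1}f(s)\,\mathrm{d}s$. *)

theory Defs
  imports "HOL-Analysis.Analysis"
begin

definition RL_int :: "real \<Rightarrow> (real \<Rightarrow> real) \<Rightarrow> real \<Rightarrow> real" where
  "RL_int \<beta> f t = (1 / Gamma \<beta>) * integral {0..t} (\<lambda>s. (t - s) powr (\<beta> - 1) * f s)"

definition RL_integrable :: "real \<Rightarrow> (real \<Rightarrow> real) \<Rightarrow> real \<Rightarrow> bool" where
  "RL_integrable \<beta> f t \<longleftrightarrow> (\<lambda>s. (t - s) powr (\<beta> - 1) * f s) integrable_on {0..t}"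

text \<open>The system of the theorem; p n t stands for p^{beta_n}(n,t), and p(-1,t) = 0.\<close>
definition solves_sys :: "real \<Rightarrow> (nat \<Rightarrow> real) \<Rightarrow> (nat \<Rightarrow> real \<Rightarrow> real) \<Rightarrow> bool" where
  "solves_sys lam \<beta> p \<longleftrightarrow>
     p 0 0 = 1 \<and> (\<forall>n\<ge>1. p n 0 = 0) \<and>
     (\<forall>n t. t \<ge> 0 \<longrightarrow> RL_integrable (\<beta> n) (p n) t \<and>
        p n t = p n 0 - lam * (RL_int (\<beta> n) (p n) t
                 - (if n = 0 then 0 else RL_int (\<beta> (n - 1)) (p (n - 1)) t)))"

text \<open>Power with the convention t^0 = 1 (also for t = 0).\<close>
definition pw :: "real \<Rightarrow> real \<Rightarrow> real" where
  "pw t e = (if e = 0 then 1 else t powr e)"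

definition Omega :: "nat \<Rightarrow> nat \<Rightarrow> nat list set" where
  "Omega k n = {ks. length ks = n + 1 \<and> sum_list ks = k \<and> (\<forall>j<n. ks ! j \<ge> 1)}"

definition inner_sum :: "(nat \<Rightarrow> real) \<Rightarrow> nat \<Rightarrow> nat \<Rightarrow> real \<Rightarrow> real" where
  "inner_sum \<beta> k n t = (\<Sum>ks\<in>Omega k n.
      pw t (\<Sum>j\<le>n. real (ks ! j) * \<beta> j) / Gamma (1 + (\<Sum>j\<le>n. real (ks ! j) * \<beta> j)))"

text \<open>The k-th term (k = n + i) of the outer series.\<close>
definition sol_term :: "real \<Rightarrow> (nat \<Rightarrow> real) \<Rightarrow> nat \<Rightarrow> real \<Rightarrow> nat \<Rightarrow> real" where
  "sol_term lam \<beta> n t i = (-lam) ^ (n + i) * inner_sum \<beta> (n + i) n t"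

definition sol :: "real \<Rightarrow> (nat \<Rightarrow> real) \<Rightarrow> nat \<Rightarrow> real \<Rightarrow> real" where
  "sol lam \<beta> n t = (-1) ^ n * (\<Sum>i. sol_term lam \<beta> n t i)"

end

theory Submission
  imports Defs
begin

text \<open>Write \<open>E e t = t ^ e / Gamma (1 + e)\<close> (\<open>normalized_power e t\<close> below). By the Beta
  integral, the fractional integral of order \<open>b\<close> maps \<open>E e\<close> to \<open>E (e + b)\<close>, and the \<open>k\<close>-th
  term of the series for \<open>p(n, t)\<close> is a sum of \<open>E w t\<close> over \<open>Omega k n\<close> with weights
  \<open>w = \<Sum>j. k_j \<beta>_j\<close>. Splitting \<open>Omega k n\<close> by whether \<open>k_n > 0\<close> or \<open>k_n = 0\<close>, and lowering
  \<open>k_n\<close> (respectively dropping \<open>k_n = 0\<close> and lowering \<open>k_(n-1)\<close>) by one, identifies the two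
  parts with the \<open>\<beta>_n\<close>-fractional integrals of the \<open>(k - 1)\<close>-th terms of the series for
  \<open>p(n, t)\<close> and \<open>p(n - 1, t)\<close>, so the series solves the system term by term. Since
  \<open>card (Omega k n)\<close> grows polynomially in \<open>k\<close> while \<open>Gamma (1 + k min \<beta>)\<close> grows
  superexponentially, the series are dominated by geometric ones on bounded intervals, which
  also justifies integrating them term by term.

  Uniqueness among continuous solutions goes by induction on \<open>n\<close>: once the components \<open>n - 1\<close>
  agree, the difference \<open>q\<close> of the components \<open>n\<close> of two solutions satisfies
  \<open>q = - lam I^\<beta>_n q\<close>, and iterating this identity gives
  \<open>\<bar>q t\<bar> \<le> M \<bar>lam\<bar>^m E (m \<beta>_n) t\<close>, which tends to \<open>0\<close>.\<close>

section \<open>Normalized powers and fractional integrals\<close>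

definition normalized_power :: "real \<Rightarrow> real \<Rightarrow> real" where
  "normalized_power e t = pw t e / Gamma (1 + e)"

lemma normalized_power_nonneg: "0 \<le> t \<Longrightarrow> 0 \<le> e \<Longrightarrow> 0 \<le> normalized_power e t"
  by (simp add: normalized_power_def pw_def Gamma_real_pos less_imp_le)

lemma normalized_power_0_left: "normalized_power e 0 = (if e = 0 then 1 else 0)"
  by (simp add: normalized_power_def pw_def)

lemma normalized_power_0_right: "normalized_power 0 t = 1"
  by (simp add: normalized_power_def pw_def)

lemma Gamma_one_plus_lower_bound:
  fixes y c :: real
  assumes "0 \<le> y" "1 \<le> c"
  shows "c powr y * exp (-(c + 1)) \<le> Gamma (1 + y)"
proof -
  define f where "f = (\<lambda>t::real. t powr (1 + y - 1) / exp t)"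
  have f_int: "(f has_integral Gamma (1 + y)) {0..}"
    unfolding f_def using Gamma_integral_real[of "1 + y"] assms by simp
  have sub: "{c..c+1} \<subseteq> {0..}" using assms by auto
  have f_int_sub: "f integrable_on {c..c+1}"
    by (rule integrable_on_subinterval[of _ "{0..}"]) (use f_int sub in auto)
  have "c powr y * exp (-(c + 1)) = integral {c..c+1} (\<lambda>_. c powr y * exp (-(c + 1)))"
    by simp
  also have "\<dots> \<le> integral {c..c+1} f"
  proof (rule integral_le[OF integrable_const_ivl f_int_sub])
    fix t assume t: "t \<in> {c..c+1}"
    have "c powr y \<le> t powr y" using t assms by (intro powr_mono2) auto
    moreover have "exp (-(c + 1)) \<le> 1 / exp t"
      using t by (simp add: exp_minus[symmetric] inverse_eq_divide[symmetric])
    ultimately have "c powr y * exp (-(c + 1)) \<le> t powr y * (1 / exp t)"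
      by (intro mult_mono) auto
    then show "c powr y * exp (-(c + 1)) \<le> f t" by (simp add: f_def)
  qed
  also have "\<dots> \<le> integral {0..} f"
    using integral_subset_le[OF sub f_int_sub] f_int by (auto simp: f_def)
  also have "\<dots> = Gamma (1 + y)" using f_int by (rule integral_unique)
  finally show ?thesis .
qed

lemma power_div_Gamma_le_geometric:
  fixes b x :: real
  assumes b: "0 < b" and x: "0 \<le> x"
  obtains C where "\<And>(k::nat) e. real k * b \<le> e \<Longrightarrow> x ^ k / Gamma (1 + e) \<le> C * (1/2) ^ k"
proof
  define c where "c = max 1 ((2 * x) powr (1 / b))"
  have c1: "1 \<le> c" by (simp add: c_def)
  have "2 * x = ((2 * x) powr (1 / b)) powr b" using b x by (simp add: powr_powr)
  also have "\<dots> \<le> c powr b" using b by (intro powr_mono2) (auto simp: c_def)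
  finally have x_le: "2 * x \<le> c powr b" .
  fix k :: nat and e :: real assume ke: "real k * b \<le> e"
  have e0: "0 \<le> e" using ke b by (smt (verit) mult_nonneg_nonneg of_nat_0_le_iff)
  have "(c powr b) ^ k * exp (-(c + 1)) \<le> c powr e * exp (-(c + 1))"
  proof (intro mult_right_mono)
    have "(c powr b) ^ k = c powr (real k * b)"
      using c1 by (simp add: powr_realpow[symmetric] powr_powr mult.commute)
    also have "\<dots> \<le> c powr e" using c1 ke by (intro powr_mono) auto
    finally show "(c powr b) ^ k \<le> c powr e" .
  qed simp
  also have "\<dots> \<le> Gamma (1 + e)" by (rule Gamma_one_plus_lower_bound[OF e0 c1])
  finally have Gamma_ge: "(c powr b) ^ k * exp (-(c + 1)) \<le> Gamma (1 + e)" .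
  have "0 < (c powr b) ^ k * exp (-(c + 1))" using c1 by simp
  then have "x ^ k / Gamma (1 + e) \<le> x ^ k / ((c powr b) ^ k * exp (-(c + 1)))"
    using Gamma_ge x by (intro divide_left_mono) auto
  also have "\<dots> = exp (c + 1) * (x / c powr b) ^ k"
    unfolding exp_minus[of "c + 1"] by (simp add: field_simps)
  also have "\<dots> \<le> exp (c + 1) * (1/2) ^ k"
    using x_le c1 x by (intro mult_left_mono power_mono) (auto simp: field_simps)
  finally show "x ^ k / Gamma (1 + e) \<le> exp (c + 1) * (1/2) ^ k" .
qed

lemma has_integral_RL_pw:
  fixes b e t :: real
  assumes b: "0 < b" and e: "0 \<le> e" and t: "0 \<le> t"
  shows "((\<lambda>s. (t - s) powr (b - 1) * pw s e) has_integral (Beta (1 + e) b * t powr (e + b))) {0..t}"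
proof (cases "t = 0")
  case True
  then show ?thesis using has_integral_refl(2)[of _ 0] by simp
next
  case False
  with t have t_pos: "0 < t" by simp
  define g where "g = (\<lambda>u::real. u powr ((1 + e) - 1) * (1 - u) powr (b - 1))"
  have "(g has_integral Beta (1 + e) b) (cbox 0 1)"
    unfolding g_def cbox_interval using has_integral_Beta_real[of "1 + e" b] b e by simp
  from has_integral_affinity'[OF this, of "1/t" 0]
  have "((\<lambda>s. g (s / t)) has_integral (t * Beta (1 + e) b)) {0..t}"
    using t_pos by (simp add: cbox_interval)
  from has_integral_mult_right[OF this, of "t powr (e + b - 1)"]
  have scaled: "((\<lambda>s. t powr (e + b - 1) * g (s / t)) has_integral (Beta (1 + e) b * t powr (e + b))) {0..t}"
    using t_pos by (simp add: powr_diff powr_add field_simps)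
  show ?thesis
  proof (rule has_integral_spike[OF _ _ scaled])
    show "negligible {0, t}" by simp
    fix s assume "s \<in> {0..t} - {0, t}"
    then have s: "0 < s" "s < t" by auto
    have "1 - s / t = (t - s) / t" using t_pos by (simp add: field_simps)
    then have "t powr (e + b - 1) * g (s / t)
        = t powr (e + b - 1) * ((s powr e / t powr e) * ((t - s) powr (b - 1) / t powr (b - 1)))"
      using s t_pos by (simp add: g_def powr_divide)
    also have "\<dots> = (t - s) powr (b - 1) * pw s e"
      using s t_pos by (simp add: pw_def powr_diff powr_add field_simps)
    finally show "(t - s) powr (b - 1) * pw s e = t powr (e + b - 1) * g (s / t)" by simp
  qed
qed

lemma has_integral_RL_normalized_power:
  fixes b e t :: real
  assumes b: "0 < b" and e: "0 \<le> e" and t: "0 \<le> t"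
  shows "((\<lambda>s. (t - s) powr (b - 1) * normalized_power e s)
           has_integral (Gamma b * normalized_power (e + b) t)) {0..t}"
proof -
  have "0 < Gamma (1 + e)" using e by (intro Gamma_real_pos) simp
  moreover have "1 + (e + b) \<noteq> 0" "e + b \<noteq> 0" using e b by auto
  ultimately have "Beta (1 + e) b * t powr (e + b) / Gamma (1 + e) = Gamma b * (t powr (e + b) / Gamma (1 + (e + b)))"
    by (simp add: Beta_def add_ac)
  also have "\<dots> = Gamma b * normalized_power (e + b) t"
    using e b by (simp add: normalized_power_def pw_def)
  finally have "Beta (1 + e) b * t powr (e + b) / Gamma (1 + e) = Gamma b * normalized_power (e + b) t" .
  then show ?thesis
    using has_integral_divide[OF has_integral_RL_pw[OF b e t], of "Gamma (1 + e)"]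
    by (simp add: normalized_power_def)
qed

lemma RL_kernel_integrable:
  fixes b t :: real
  assumes "0 < b" "0 \<le> t"
  shows "(\<lambda>s. (t - s) powr (b - 1)) integrable_on {0..t}"
  using has_integral_RL_pw[OF assms(1) _ assms(2), of 0] by (auto simp: pw_def)

lemma has_integral_RL_suminf:
  fixes b t :: real and f :: "nat \<Rightarrow> real \<Rightarrow> real"
  assumes b: "0 < b" and t: "0 \<le> t"
    and f_int: "\<And>i. ((\<lambda>s. (t - s) powr (b - 1) * f i s) has_integral I i) {0..t}"
    and f_le: "\<And>i s. s \<in> {0..t} \<Longrightarrow> \<bar>f i s\<bar> \<le> M i" and M: "summable M"
  shows "I sums integral {0..t} (\<lambda>s. (t - s) powr (b - 1) * (\<Sum>i. f i s))"
    and "((\<lambda>s. (t - s) powr (b - 1) * (\<Sum>i. f i s)) has_integral (\<Sum>i. I i)) {0..t}"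
proof -
  define F where "F = (\<lambda>N s. (t - s) powr (b - 1) * (\<Sum>i<N. f i s))"
  define h where "h = (\<lambda>s. (t - s) powr (b - 1) * suminf M)"
  have M_nonneg: "0 \<le> M i" for i using f_le[of 0 i] t by force
  have F_int: "(F N has_integral (\<Sum>i<N. I i)) {0..t}" for N
    unfolding F_def sum_distrib_left by (intro has_integral_sum f_int) auto
  have h_int: "h integrable_on {0..t}"
    unfolding h_def using integrable_on_mult_left[OF RL_kernel_integrable[OF b t]] by simp
  have F_le: "norm (F N s) \<le> h s" if "s \<in> {0..t}" for N s
  proof -
    have "\<bar>\<Sum>i<N. f i s\<bar> \<le> (\<Sum>i<N. M i)"
      by (rule order_trans[OF sum_abs sum_mono]) (use f_le that in auto)
    also have "\<dots> \<le> suminf M" using M M_nonneg by (intro sum_le_suminf) auto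
    finally have "\<bar>\<Sum>i<N. f i s\<bar> \<le> suminf M" .
    then show ?thesis unfolding F_def h_def by (simp add: abs_mult mult_left_mono)
  qed
  have F_lim: "(\<lambda>N. F N s) \<longlonglongrightarrow> (t - s) powr (b - 1) * (\<Sum>i. f i s)" if "s \<in> {0..t}" for s
  proof -
    have "summable (\<lambda>i. f i s)"
      by (rule summable_comparison_test[OF _ M]) (use f_le that in auto)
    then show ?thesis unfolding F_def by (intro tendsto_mult_left summable_LIMSEQ)
  qed
  note DC = dominated_convergence[of F "{0..t}" h, OF _ h_int F_le F_lim]
  have "(\<lambda>N. integral {0..t} (F N)) \<longlonglongrightarrow> integral {0..t} (\<lambda>s. (t - s) powr (b - 1) * (\<Sum>i. f i s))"
    using DC(2) F_int by blast
  moreover have "integral {0..t} (F N) = (\<Sum>i<N. I i)" for N using F_int by (rule integral_unique)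
  ultimately show sums: "I sums integral {0..t} (\<lambda>s. (t - s) powr (b - 1) * (\<Sum>i. f i s))"
    by (simp add: sums_def)
  have "(\<lambda>s. (t - s) powr (b - 1) * (\<Sum>i. f i s)) integrable_on {0..t}"
    using DC(1) F_int by blast
  with sums_unique[OF sums]
  show "((\<lambda>s. (t - s) powr (b - 1) * (\<Sum>i. f i s)) has_integral (\<Sum>i. I i)) {0..t}"
    by (metis has_integral_integral)
qed

lemma RL_integrable_diff:
  "RL_integrable b f t \<Longrightarrow> RL_integrable b g t \<Longrightarrow> RL_integrable b (\<lambda>s. f s - g s) t"
  unfolding RL_integrable_def by (drule (1) integrable_diff) (simp add: right_diff_distrib)

lemma RL_int_diff:
  assumes "RL_integrable b f t" "RL_integrable b g t"
  shows "RL_int b (\<lambda>s. f s - g s) t = RL_int b f t - RL_int b g t"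
  using assms unfolding RL_integrable_def RL_int_def
  by (simp add: right_diff_distrib integral_diff)

lemma RL_int_cong: "(\<And>s. 0 \<le> s \<Longrightarrow> s \<le> t \<Longrightarrow> f s = g s) \<Longrightarrow> RL_int b f t = RL_int b g t"
  unfolding RL_int_def by (metis (no_types, lifting) atLeastAtMost_iff integral_cong)

lemma abs_RL_int_le_normalized_power:
  fixes b e t K :: real
  assumes b: "0 < b" and e: "0 \<le> e" and t: "0 \<le> t" and q_int: "RL_integrable b q t"
    and q_le: "\<And>s. 0 \<le> s \<Longrightarrow> s \<le> t \<Longrightarrow> \<bar>q s\<bar> \<le> K * normalized_power e s"
  shows "\<bar>RL_int b q t\<bar> \<le> K * normalized_power (e + b) t"
proof -
  have Gamma_pos: "0 < Gamma b" using b by (rule Gamma_real_pos)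
  have majorant: "((\<lambda>s. K * ((t - s) powr (b - 1) * normalized_power e s)) has_integral
      K * (Gamma b * normalized_power (e + b) t)) {0..t}"
    using b e t by (intro has_integral_mult_right has_integral_RL_normalized_power)
  have "norm (integral {0..t} (\<lambda>s. (t - s) powr (b - 1) * q s))
      \<le> integral {0..t} (\<lambda>s. K * ((t - s) powr (b - 1) * normalized_power e s))"
  proof (rule integral_norm_bound_integral)
    show "(\<lambda>s. (t - s) powr (b - 1) * q s) integrable_on {0..t}"
      using q_int by (simp add: RL_integrable_def)
    show "(\<lambda>s. K * ((t - s) powr (b - 1) * normalized_power e s)) integrable_on {0..t}"
      using majorant by blast
    fix s assume "s \<in> {0..t}"
    then have "(t - s) powr (b - 1) * \<bar>q s\<bar> \<le> (t - s) powr (b - 1) * (K * normalized_power e s)"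
      using q_le by (intro mult_left_mono) auto
    then show "norm ((t - s) powr (b - 1) * q s) \<le> K * ((t - s) powr (b - 1) * normalized_power e s)"
      by (simp add: abs_mult mult_ac)
  qed
  also have "\<dots> = K * (Gamma b * normalized_power (e + b) t)"
    using majorant by (rule integral_unique)
  finally show ?thesis
    using Gamma_pos by (simp add: RL_int_def abs_mult divide_le_eq mult_ac)
qed

lemma RL_homogeneous_iterated_bound:
  fixes b lam M T :: real and q :: "real \<Rightarrow> real"
  assumes b: "0 < b"
    and q_le: "\<And>t. 0 \<le> t \<Longrightarrow> t \<le> T \<Longrightarrow> \<bar>q t\<bar> \<le> M"
    and q_int: "\<And>t. 0 \<le> t \<Longrightarrow> t \<le> T \<Longrightarrow> RL_integrable b q t"
    and q_eq: "\<And>t. 0 \<le> t \<Longrightarrow> t \<le> T \<Longrightarrow> q t = - lam * RL_int b q t"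
  shows "0 \<le> t \<Longrightarrow> t \<le> T \<Longrightarrow> \<bar>q t\<bar> \<le> M * \<bar>lam\<bar> ^ m * normalized_power (real m * b) t"
proof (induction m arbitrary: t)
  case 0
  then show ?case using q_le by (simp add: normalized_power_def pw_def)
next
  case (Suc m)
  have "\<bar>RL_int b q t\<bar> \<le> M * \<bar>lam\<bar> ^ m * normalized_power (real m * b + b) t"
    using b Suc.prems q_int Suc.IH by (intro abs_RL_int_le_normalized_power) auto
  then have "\<bar>lam\<bar> * \<bar>RL_int b q t\<bar> \<le> \<bar>lam\<bar> * (M * \<bar>lam\<bar> ^ m * normalized_power (real m * b + b) t)"
    by (intro mult_left_mono) auto
  then show ?case
    using q_eq[OF Suc.prems] by (simp add: abs_mult algebra_simps)
qed

lemma RL_homogeneous_eq_zero: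
  fixes b lam M T :: real and q :: "real \<Rightarrow> real"
  assumes b: "0 < b" and T: "0 \<le> T"
    and q_le: "\<And>t. 0 \<le> t \<Longrightarrow> t \<le> T \<Longrightarrow> \<bar>q t\<bar> \<le> M"
    and q_int: "\<And>t. 0 \<le> t \<Longrightarrow> t \<le> T \<Longrightarrow> RL_integrable b q t"
    and q_eq: "\<And>t. 0 \<le> t \<Longrightarrow> t \<le> T \<Longrightarrow> q t = - lam * RL_int b q t"
  shows "q T = 0"
proof -
  have iterated: "\<bar>q T\<bar> \<le> M * \<bar>lam\<bar> ^ m * normalized_power (real m * b) T" for m
    using RL_homogeneous_iterated_bound[OF b q_le q_int q_eq T order_refl] .
  define x where "x = \<bar>lam\<bar> * T powr b"
  have "0 \<le> x" by (simp add: x_def)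
  then obtain C where C: "\<And>k e. real k * b \<le> e \<Longrightarrow> x ^ k / Gamma (1 + e) \<le> C * (1/2) ^ k"
    using power_div_Gamma_le_geometric[OF b] by blast
  have M_nonneg: "0 \<le> M" using q_le[OF T order_refl] by linarith
  have "\<bar>lam\<bar> ^ m * normalized_power (real m * b) T \<le> x ^ m / Gamma (1 + real m * b)" for m
  proof (cases "m = 0 \<or> T = 0")
    case True
    then show ?thesis using b Gamma_real_pos[of "1 + real m * b"]
      by (auto simp: normalized_power_def pw_def x_def power_0_left)
  next
    case False
    then show ?thesis using b T
      by (simp add: normalized_power_def pw_def x_def power_mult_distrib powr_realpow[symmetric]
          powr_powr mult.commute)
  qed
  then have bound: "\<bar>q T\<bar> \<le> M * (C * (1/2) ^ m)" for m
    using iterated[of m] C[of m "real m * b"] M_nonneg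
    by (smt (verit, best) mult_left_mono mult.assoc)
  have "(\<lambda>m. M * (C * (1/2::real) ^ m)) \<longlonglongrightarrow> M * (C * 0)"
    by (intro tendsto_intros) simp
  then have "\<bar>q T\<bar> \<le> 0"
    using bound by (intro tendsto_lowerbound[where F = sequentially]) (auto intro: always_eventually)
  then show ?thesis by simp
qed

section \<open>The index sets \<open>Omega\<close>\<close>

definition weight :: "(nat \<Rightarrow> real) \<Rightarrow> nat \<Rightarrow> nat list \<Rightarrow> real" where
  "weight \<beta> n ks = (\<Sum>j\<le>n. real (ks ! j) * \<beta> j)"

lemma inner_sum_eq_sum_normalized_power:
  "inner_sum \<beta> k n t = (\<Sum>ks\<in>Omega k n. normalized_power (weight \<beta> n ks) t)"
  by (simp add: inner_sum_def normalized_power_def weight_def)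

lemma sum_list_eq_sum_atMost: "length ks = Suc n \<Longrightarrow> sum_list ks = (\<Sum>j\<le>n. ks ! j)"
  by (simp add: sum_list_sum_nth atLeast0LessThan lessThan_Suc_atMost)

lemma Omega_subset_lists: "Omega k n \<subseteq> {ks. set ks \<subseteq> {0..k} \<and> length ks = Suc n}"
  unfolding Omega_def using member_le_sum_list by fastforce

lemma finite_Omega: "finite (Omega k n)"
  by (rule finite_subset[OF Omega_subset_lists]) (simp add: finite_lists_length_eq)

lemma card_Omega_le: "card (Omega k n) \<le> (k + 1) ^ (n + 1)"
proof -
  have "card (Omega k n) \<le> card {ks. set ks \<subseteq> {0..k} \<and> length ks = Suc n}"
    by (rule card_mono[OF _ Omega_subset_lists]) (simp add: finite_lists_length_eq)
  also have "\<dots> = (k + 1) ^ (n + 1)" by (simp add: card_lists_length_eq)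
  finally show ?thesis .
qed

lemma weight_bounds:
  assumes ks: "ks \<in> Omega k n" and lower: "\<And>j. j \<le> n \<Longrightarrow> b \<le> \<beta> j" and upper: "\<And>j. \<beta> j \<le> 1"
  shows "real k * b \<le> weight \<beta> n ks" and "weight \<beta> n ks \<le> real k"
proof -
  have "real k = (\<Sum>j\<le>n. real (ks ! j))"
    using ks sum_list_eq_sum_atMost[of ks n] by (simp add: Omega_def)
  then have k: "real k * c = (\<Sum>j\<le>n. real (ks ! j) * c)" for c by (simp add: sum_distrib_right)
  show "real k * b \<le> weight \<beta> n ks"
    unfolding k weight_def by (intro sum_mono mult_left_mono lower) auto
  show "weight \<beta> n ks \<le> real k"
    using k[of 1] unfolding weight_def by (simp add: sum_mono mult_left_le upper)
qed

lemma weight_nonneg: "(\<And>j. 0 \<le> \<beta> j) \<Longrightarrow> 0 \<le> weight \<beta> n ks"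
  unfolding weight_def by (intro sum_nonneg) auto

lemma weight_pos:
  assumes ks: "ks \<in> Omega k n" and n: "1 \<le> n" and \<beta>: "\<And>j. 0 < \<beta> j"
  shows "0 < weight \<beta> n ks"
proof -
  have "0 < real (ks ! 0) * \<beta> 0" using ks n \<beta>[of 0] by (auto simp: Omega_def)
  also have "\<dots> \<le> weight \<beta> n ks"
    unfolding weight_def using \<beta> by (intro member_le_sum) (auto simp: less_imp_le)
  finally show ?thesis .
qed

lemma weight_update_last:
  "length ks = Suc n \<Longrightarrow> weight \<beta> n (ks[n := v]) = weight \<beta> n ks + (real v - real (ks ! n)) * \<beta> n"
  by (simp add: weight_def lessThan_Suc_atMost[symmetric] algebra_simps)

lemma weight_append_zero: "length ks = Suc m \<Longrightarrow> weight \<beta> (Suc m) (ks @ [0]) = weight \<beta> m ks"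
  by (simp add: weight_def nth_append)

definition Omega_last_pos :: "nat \<Rightarrow> nat \<Rightarrow> nat list set" where
  "Omega_last_pos k n = {ks \<in> Omega k n. ks ! n \<noteq> 0}"

definition Omega_last_zero :: "nat \<Rightarrow> nat \<Rightarrow> nat list set" where
  "Omega_last_zero k n = {ks \<in> Omega k n. ks ! n = 0}"

lemma sum_Omega_split:
  "(\<Sum>ks\<in>Omega k n. f ks) = (\<Sum>ks\<in>Omega_last_pos k n. f ks) + (\<Sum>ks\<in>Omega_last_zero k n. f ks)"
proof -
  have "Omega k n = Omega_last_pos k n \<union> Omega_last_zero k n"
    and "Omega_last_pos k n \<inter> Omega_last_zero k n = {}"
    by (auto simp: Omega_last_pos_def Omega_last_zero_def)
  moreover have "finite (Omega_last_pos k n)" "finite (Omega_last_zero k n)"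
    using finite_Omega by (auto simp: Omega_last_pos_def Omega_last_zero_def)
  ultimately show ?thesis by (simp add: sum.union_disjoint)
qed

lemma Omega_last_pos_diag: "Omega_last_pos n n = {}"
proof -
  have False if ks: "ks \<in> Omega_last_pos n n" for ks
  proof -
    have len: "length ks = Suc n" and ge: "\<forall>j<n. 1 \<le> ks ! j" and last: "ks ! n \<noteq> 0"
      using ks by (auto simp: Omega_last_pos_def Omega_def)
    have "n = (\<Sum>j<n. ks ! j) + ks ! n"
      using ks sum_list_eq_sum_atMost[OF len]
      by (simp add: Omega_last_pos_def Omega_def lessThan_Suc_atMost[symmetric])
    moreover have "(\<Sum>j<n. 1) \<le> (\<Sum>j<n. ks ! j)" using ge by (intro sum_mono) auto
    ultimately show False using last by simp
  qed
  then show ?thesis by blast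
qed

lemma Omega_0: "Omega k 0 = {[k]}"
proof -
  have "ks = [k]" if "length ks = Suc 0" "sum_list ks = k" for ks
    using that by (cases ks) auto
  then show ?thesis by (auto simp: Omega_def)
qed

lemma Omega_last_zero_0: "Omega_last_zero k 0 = (if k = 0 then {[0]} else {})"
  by (auto simp: Omega_last_zero_def Omega_0)

lemma bij_betw_Omega_last_pos:
  "bij_betw (\<lambda>ks. ks[n := Suc (ks ! n)]) (Omega k n) (Omega_last_pos (Suc k) n)"
proof (rule bij_betw_byWitness[where f' = "\<lambda>ks. ks[n := ks ! n - 1]"])
  show "\<forall>ks\<in>Omega k n. (ks[n := Suc (ks ! n)])[n := ks[n := Suc (ks ! n)] ! n - 1] = ks"
    by (auto simp: Omega_def)
  show "\<forall>ks\<in>Omega_last_pos (Suc k) n. (ks[n := ks ! n - 1])[n := Suc (ks[n := ks ! n - 1] ! n)] = ks"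
    by (auto simp: Omega_last_pos_def Omega_def)
  show "(\<lambda>ks. ks[n := Suc (ks ! n)]) ` Omega k n \<subseteq> Omega_last_pos (Suc k) n"
    by (auto simp: Omega_last_pos_def Omega_def sum_list_update nth_list_update)
  show "(\<lambda>ks. ks[n := ks ! n - 1]) ` Omega_last_pos (Suc k) n \<subseteq> Omega k n"
    by (auto simp: Omega_last_pos_def Omega_def sum_list_update nth_list_update)
qed

lemma Omega_last_zero_Suc_eq:
  assumes "ks \<in> Omega_last_zero k (Suc m)"
  shows "ks = butlast ks @ [0]" and "butlast ks \<in> Omega k m"
proof -
  have len: "length ks = Suc (Suc m)" and last: "ks ! Suc m = 0"
    using assms by (auto simp: Omega_last_zero_def Omega_def)
  moreover have "ks \<noteq> []" using len by auto
  ultimately have "last ks = 0" by (simp add: last_conv_nth)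
  with \<open>ks \<noteq> []\<close> show eq: "ks = butlast ks @ [0]" by (metis append_butlast_last_id)
  show "butlast ks \<in> Omega k m"
    using assms arg_cong[OF eq, of sum_list] by (auto simp: Omega_last_zero_def Omega_def nth_butlast)
qed

lemma bij_betw_Omega_last_zero:
  "bij_betw (\<lambda>ks. ks[m := Suc (ks ! m)] @ [0]) (Omega k m) (Omega_last_zero (Suc k) (Suc m))"
proof (rule bij_betw_byWitness[where f' = "\<lambda>ks. (butlast ks)[m := ks ! m - 1]"])
  show "\<forall>ks\<in>Omega k m. (butlast (ks[m := Suc (ks ! m)] @ [0]))[m := (ks[m := Suc (ks ! m)] @ [0]) ! m - 1] = ks"
    by (auto simp: Omega_def nth_append)
  show "(\<lambda>ks. ks[m := Suc (ks ! m)] @ [0]) ` Omega k m \<subseteq> Omega_last_zero (Suc k) (Suc m)"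
    by (auto simp: Omega_last_zero_def Omega_def sum_list_update nth_append nth_list_update less_Suc_eq)
  show "(\<lambda>ks. (butlast ks)[m := ks ! m - 1]) ` Omega_last_zero (Suc k) (Suc m) \<subseteq> Omega k m"
  proof clarify
    fix ks assume ks: "ks \<in> Omega_last_zero (Suc k) (Suc m)"
    from Omega_last_zero_Suc_eq[OF this] have "butlast ks \<in> Omega (Suc k) m" by simp
    moreover have "1 \<le> ks ! m" using ks by (auto simp: Omega_last_zero_def Omega_def)
    ultimately show "(butlast ks)[m := ks ! m - 1] \<in> Omega k m"
      by (auto simp: Omega_def sum_list_update nth_list_update nth_butlast)
  qed
  show "\<forall>ks\<in>Omega_last_zero (Suc k) (Suc m). ((butlast ks)[m := ks ! m - 1])[m := Suc ((butlast ks)[m := ks ! m - 1] ! m)] @ [0] = ks"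
  proof
    fix ks assume ks: "ks \<in> Omega_last_zero (Suc k) (Suc m)"
    note eq = Omega_last_zero_Suc_eq[OF this]
    have ge1: "1 \<le> ks ! m" and len: "length ks = Suc (Suc m)"
      using ks by (auto simp: Omega_last_zero_def Omega_def)
    then have "butlast ks ! m = ks ! m" by (simp add: nth_butlast)
    then have "(butlast ks)[m := ks ! m] = butlast ks" by (metis list_update_id)
    with ge1 len have "((butlast ks)[m := ks ! m - 1])[m := Suc ((butlast ks)[m := ks ! m - 1] ! m)] = butlast ks"
      by simp
    then show "((butlast ks)[m := ks ! m - 1])[m := Suc ((butlast ks)[m := ks ! m - 1] ! m)] @ [0] = ks"
      using eq(1) by simp
  qed
qed

lemma sum_Omega_last_pos_shift:
  "(\<Sum>ks\<in>Omega k n. g (weight \<beta> n ks + \<beta> n)) = (\<Sum>ks\<in>Omega_last_pos (Suc k) n. g (weight \<beta> n ks))"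
  unfolding sum.reindex_bij_betw[OF bij_betw_Omega_last_pos, symmetric]
  by (intro sum.cong) (auto simp: Omega_def weight_update_last algebra_simps)

lemma sum_Omega_last_zero_shift:
  "(\<Sum>ks\<in>Omega k m. g (weight \<beta> m ks + \<beta> m))
     = (\<Sum>ks\<in>Omega_last_zero (Suc k) (Suc m). g (weight \<beta> (Suc m) ks))"
  unfolding sum.reindex_bij_betw[OF bij_betw_Omega_last_zero, symmetric]
  by (intro sum.cong) (auto simp: Omega_def weight_append_zero weight_update_last algebra_simps)

section \<open>Convergence of the series\<close>

lemma normalized_power_weight_le:
  assumes ks: "ks \<in> Omega k n" and \<beta>: "\<And>j. 0 \<le> \<beta> j \<and> \<beta> j \<le> 1"
    and s: "0 \<le> s" "s \<le> Y" and Y: "1 \<le> Y"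
  shows "normalized_power (weight \<beta> n ks) s \<le> Y ^ k / Gamma (1 + weight \<beta> n ks)"
proof -
  let ?e = "weight \<beta> n ks"
  have e: "0 \<le> ?e" "?e \<le> real k"
    using weight_nonneg[of \<beta>] weight_bounds(2)[OF ks, of 0] \<beta> by auto
  have "pw s ?e \<le> Y ^ k"
  proof (cases "?e = 0")
    case False
    have "s powr ?e \<le> Y powr ?e" using s e by (intro powr_mono2) auto
    also have "\<dots> \<le> Y powr real k" using Y e by (intro powr_mono) auto
    finally show ?thesis using False Y by (simp add: pw_def powr_realpow)
  qed (use Y in \<open>simp add: pw_def\<close>)
  moreover have "0 < Gamma (1 + ?e)" using e by (intro Gamma_real_pos) simp
  ultimately show ?thesis by (simp add: normalized_power_def divide_right_mono)
qed

lemma inner_sum_nonneg: "(\<And>j. 0 \<le> \<beta> j) \<Longrightarrow> 0 \<le> t \<Longrightarrow> 0 \<le> inner_sum \<beta> k n t"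
  unfolding inner_sum_eq_sum_normalized_power by (intro sum_nonneg normalized_power_nonneg weight_nonneg) auto

lemma inner_sum_geometric_bound:
  fixes lam T :: real
  assumes lam: "0 \<le> lam" and \<beta>: "\<And>j. 0 < \<beta> j \<and> \<beta> j \<le> 1"
  obtains C where "\<And>k s. 0 \<le> s \<Longrightarrow> s \<le> T \<Longrightarrow> lam ^ k * inner_sum \<beta> k n s \<le> C * (1/2) ^ k"
proof -
  define b where "b = Min (\<beta> ` {..n})"
  have b_pos: "0 < b" unfolding b_def using \<beta> by (subst Min_gr_iff) auto
  have b_le: "b \<le> \<beta> j" if "j \<le> n" for j unfolding b_def using that by (intro Min_le) auto
  define Y where "Y = max 1 T"
  have Y: "1 \<le> Y" by (simp add: Y_def)
  \<comment> \<open>the factor \<open>2 ^ (n + 1)\<close> absorbs \<open>card (Omega k n) \<le> (k + 1) ^ (n + 1) \<le> 2 ^ (k * (n + 1))\<close>\<close>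
  have "0 \<le> 2 ^ (n + 1) * lam * Y" using lam Y by simp
  then obtain C where C: "\<And>k e. real k * b \<le> e \<Longrightarrow> (2 ^ (n + 1) * lam * Y) ^ k / Gamma (1 + e) \<le> C * (1/2) ^ k"
    using power_div_Gamma_le_geometric[OF b_pos] by blast
  show ?thesis
  proof (rule that)
    fix k s assume s: "0 \<le> s" "s \<le> T"
    define D where "D = C * (1/2) ^ k / 2 ^ ((n + 1) * k)"
    have term_le: "lam ^ k * normalized_power (weight \<beta> n ks) s \<le> D" if ks: "ks \<in> Omega k n" for ks
    proof -
      let ?e = "weight \<beta> n ks"
      have "lam ^ k * normalized_power ?e s \<le> lam ^ k * (Y ^ k / Gamma (1 + ?e))"
        using normalized_power_weight_le[OF ks, where \<beta> = \<beta> and s = s and Y = Y] \<beta> s Y lam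
        by (intro mult_left_mono) (auto simp: Y_def less_imp_le)
      also have "\<dots> = (2 ^ (n + 1) * lam * Y) ^ k / Gamma (1 + ?e) / 2 ^ ((n + 1) * k)"
        unfolding power_mult[of "2::real" "n + 1"] by (simp add: power_mult_distrib)
      also have "\<dots> \<le> D"
        unfolding D_def using C[OF weight_bounds(1)[OF ks b_le]] \<beta> by (intro divide_right_mono) auto
      finally show ?thesis .
    qed
    have C_nonneg: "0 \<le> C" using C[of 0 0] by simp
    have "lam ^ k * inner_sum \<beta> k n s = (\<Sum>ks\<in>Omega k n. lam ^ k * normalized_power (weight \<beta> n ks) s)"
      by (simp add: inner_sum_eq_sum_normalized_power sum_distrib_left)
    also have "\<dots> \<le> real (card (Omega k n)) * D"
      using sum_mono[OF term_le] by simp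
    also have "\<dots> \<le> (2 ^ k) ^ (n + 1) * D"
    proof (rule mult_right_mono)
      have "real (k + 1) \<le> 2 ^ k"
        by (induction k) auto
      then have "real ((k + 1) ^ (n + 1)) \<le> (2 ^ k) ^ (n + 1)"
        unfolding of_nat_power by (rule power_mono) simp
      then show "real (card (Omega k n)) \<le> (2 ^ k) ^ (n + 1)"
        using card_Omega_le[of k n] of_nat_mono by (smt (verit))
    qed (simp add: D_def C_nonneg)
    also have "\<dots> = C * (1/2) ^ k"
      by (simp add: D_def power_mult[symmetric] power_add mult.commute)
    finally show "lam ^ k * inner_sum \<beta> k n s \<le> C * (1/2) ^ k" .
  qed
qed

lemma sol_term_majorant:
  fixes lam T :: real
  assumes lam: "0 \<le> lam" and \<beta>: "\<And>j. 0 < \<beta> j \<and> \<beta> j \<le> 1"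
  obtains M where "summable M" and "\<And>i s. 0 \<le> s \<Longrightarrow> s \<le> T \<Longrightarrow> \<bar>sol_term lam \<beta> n s i\<bar> \<le> M i"
proof -
  obtain C where C: "\<And>k s. 0 \<le> s \<Longrightarrow> s \<le> T \<Longrightarrow> lam ^ k * inner_sum \<beta> k n s \<le> C * (1/2) ^ k"
    using inner_sum_geometric_bound[where \<beta> = \<beta> and T = T and n = n, OF lam \<beta>] by blast
  show ?thesis
  proof (rule that)
    show "summable (\<lambda>i. C * (1/2::real) ^ (n + i))"
      by (simp add: power_add summable_mult)
    fix i s assume s: "0 \<le> s" "s \<le> T"
    have "0 \<le> inner_sum \<beta> (n + i) n s"
      using \<beta> s by (intro inner_sum_nonneg) (auto simp: less_imp_le)
    then have "\<bar>sol_term lam \<beta> n s i\<bar> = lam ^ (n + i) * inner_sum \<beta> (n + i) n s"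
      using lam by (simp add: sol_term_def abs_mult power_abs)
    also have "\<dots> \<le> C * (1/2) ^ (n + i)" using C[OF s] .
    finally show "\<bar>sol_term lam \<beta> n s i\<bar> \<le> C * (1/2) ^ (n + i)" .
  qed
qed

lemma summable_sol_term:
  assumes "0 \<le> lam" "\<And>j. 0 < \<beta> j \<and> \<beta> j \<le> 1" "0 \<le> t"
  shows "summable (sol_term lam \<beta> n t)"
proof -
  obtain M where M: "summable M" "\<And>i s. 0 \<le> s \<Longrightarrow> s \<le> t \<Longrightarrow> \<bar>sol_term lam \<beta> n s i\<bar> \<le> M i"
    using sol_term_majorant[where \<beta> = \<beta> and T = t and n = n, OF assms(1,2)] by blast
  show ?thesis
    by (rule summable_comparison_test[OF _ M(1)]) (use M(2) assms(3) in auto)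
qed

lemma bounded_sol_image:
  assumes "0 \<le> lam" "\<And>j. 0 < \<beta> j \<and> \<beta> j \<le> 1"
  shows "bounded (sol lam \<beta> n ` {0..T})"
proof -
  obtain M where M: "summable M" "\<And>i s. 0 \<le> s \<Longrightarrow> s \<le> T \<Longrightarrow> \<bar>sol_term lam \<beta> n s i\<bar> \<le> M i"
    using sol_term_majorant[where \<beta> = \<beta> and T = T and n = n, OF assms] by blast
  have "\<bar>sol lam \<beta> n s\<bar> \<le> suminf M" if "s \<in> {0..T}" for s
  proof -
    have "norm (\<Sum>i. sol_term lam \<beta> n s i) \<le> suminf M"
      using M that by (intro norm_suminf_le) auto
    then show ?thesis by (simp add: sol_def abs_mult)
  qed
  then show ?thesis unfolding bounded_iff by (intro exI[of _ "suminf M"]) auto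
qed

section \<open>The series solves the system\<close>

definition inner_sum_shifted :: "(nat \<Rightarrow> real) \<Rightarrow> nat \<Rightarrow> nat \<Rightarrow> real \<Rightarrow> real" where
  "inner_sum_shifted \<beta> k n t = (\<Sum>ks\<in>Omega k n. normalized_power (weight \<beta> n ks + \<beta> n) t)"

lemma has_integral_RL_inner_sum:
  assumes \<beta>: "\<And>j. 0 < \<beta> j" and t: "0 \<le> t"
  shows "((\<lambda>s. (t - s) powr (\<beta> n - 1) * inner_sum \<beta> k n s)
           has_integral (Gamma (\<beta> n) * inner_sum_shifted \<beta> k n t)) {0..t}"
proof -
  have "((\<lambda>s. \<Sum>ks\<in>Omega k n. (t - s) powr (\<beta> n - 1) * normalized_power (weight \<beta> n ks) s) has_integral
          (\<Sum>ks\<in>Omega k n. Gamma (\<beta> n) * normalized_power (weight \<beta> n ks + \<beta> n) t)) {0..t}"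
    using \<beta> t by (intro has_integral_sum finite_Omega has_integral_RL_normalized_power weight_nonneg)
      (auto intro: less_imp_le)
  then show ?thesis
    by (simp add: inner_sum_eq_sum_normalized_power inner_sum_shifted_def sum_distrib_left)
qed

lemma RL_int_sol_series:
  fixes lam t :: real
  assumes lam: "0 \<le> lam" and \<beta>: "\<And>j. 0 < \<beta> j \<and> \<beta> j \<le> 1" and t: "0 \<le> t"
  shows "RL_integrable (\<beta> n) (sol lam \<beta> n) t"
    and "(\<lambda>i. (-lam) ^ (n + i) * inner_sum_shifted \<beta> (n + i) n t) sums ((-1) ^ n * RL_int (\<beta> n) (sol lam \<beta> n) t)"
proof -
  obtain M where M: "summable M" "\<And>i s. 0 \<le> s \<Longrightarrow> s \<le> t \<Longrightarrow> \<bar>sol_term lam \<beta> n s i\<bar> \<le> M i"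
    using sol_term_majorant[where \<beta> = \<beta> and T = t and n = n, OF lam \<beta>] by blast
  have \<beta>_pos: "0 < \<beta> n" using \<beta> by simp
  define f where "f = (\<lambda>i s. (-1) ^ n * sol_term lam \<beta> n s i)"
  define c where "c = (\<lambda>i. (-1) ^ n * (-lam) ^ (n + i) * inner_sum_shifted \<beta> (n + i) n t)"
  have f_int: "((\<lambda>s. (t - s) powr (\<beta> n - 1) * f i s) has_integral Gamma (\<beta> n) * c i) {0..t}" for i
  proof -
    have "((\<lambda>s. ((-1) ^ n * (-lam) ^ (n + i)) * ((t - s) powr (\<beta> n - 1) * inner_sum \<beta> (n + i) n s))
        has_integral ((-1) ^ n * (-lam) ^ (n + i)) * (Gamma (\<beta> n) * inner_sum_shifted \<beta> (n + i) n t)) {0..t}"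
      using \<beta> t by (intro has_integral_mult_right has_integral_RL_inner_sum) auto
    then show ?thesis by (simp add: f_def c_def sol_term_def mult_ac)
  qed
  have f_le: "\<bar>f i s\<bar> \<le> M i" if "s \<in> {0..t}" for i s
    using M(2)[of s i] that by (simp add: f_def abs_mult)
  have "(\<Sum>i. f i s) = sol lam \<beta> n s" if "s \<in> {0..t}" for s
    unfolding f_def sol_def using summable_sol_term[OF lam \<beta>] that by (intro suminf_mult) simp
  then have kernel_sol: "(t - s) powr (\<beta> n - 1) * (\<Sum>i. f i s) = (t - s) powr (\<beta> n - 1) * sol lam \<beta> n s"
    if "s \<in> {0..t}" for s
    using that by simp
  note series = has_integral_RL_suminf[OF \<beta>_pos t f_int f_le M(1)]
  have "((\<lambda>s. (t - s) powr (\<beta> n - 1) * sol lam \<beta> n s) has_integral (\<Sum>i. Gamma (\<beta> n) * c i)) {0..t}"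
    using series(2) has_integral_cong[of "{0..t}", OF kernel_sol] by simp
  then show "RL_integrable (\<beta> n) (sol lam \<beta> n) t"
    unfolding RL_integrable_def by blast
  have "(\<lambda>i. Gamma (\<beta> n) * c i) sums integral {0..t} (\<lambda>s. (t - s) powr (\<beta> n - 1) * sol lam \<beta> n s)"
    using series(1) integral_cong[of "{0..t}", OF kernel_sol] by simp
  then have "c sums RL_int (\<beta> n) (sol lam \<beta> n) t"
    using sums_divide[of _ _ "Gamma (\<beta> n)"] Gamma_real_pos[OF \<beta>_pos] by (fastforce simp: RL_int_def)
  from sums_mult[OF this, of "(-1) ^ n"]
  show "(\<lambda>i. (-lam) ^ (n + i) * inner_sum_shifted \<beta> (n + i) n t) sums ((-1) ^ n * RL_int (\<beta> n) (sol lam \<beta> n) t)"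
    by (simp add: c_def mult.assoc[symmetric] power_mult_distrib[symmetric])
qed

lemma sol_at_0:
  assumes \<beta>: "\<And>j. 0 < \<beta> j"
  shows "sol lam \<beta> n 0 = (if n = 0 then 1 else 0)"
proof (cases "n = 0")
  case True
  have "weight \<beta> 0 [i] = 0 \<longleftrightarrow> i = 0" for i
    using \<beta>[of 0] by (simp add: weight_def)
  then have "sol_term lam \<beta> 0 0 = (\<lambda>i. if i = 0 then 1 else 0)"
    by (intro ext) (simp add: sol_term_def inner_sum_eq_sum_normalized_power Omega_0 normalized_power_0_left)
  then show ?thesis
    using True sums_single[of 0 "\<lambda>_. 1::real"] by (simp add: sol_def sums_iff)
next
  case False
  have "normalized_power (weight \<beta> n ks) 0 = 0" if "ks \<in> Omega k n" for ks k
    using weight_pos[where \<beta> = \<beta>, OF that _ \<beta>] False by (simp add: normalized_power_0_left)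
  then have "inner_sum \<beta> k n 0 = 0" for k
    by (simp add: inner_sum_eq_sum_normalized_power)
  then show ?thesis using False by (simp add: sol_def sol_term_def)
qed

lemma inner_sum_shifted_eq_last_pos:
  "inner_sum_shifted \<beta> k n t = (\<Sum>ks\<in>Omega_last_pos (Suc k) n. normalized_power (weight \<beta> n ks) t)"
  unfolding inner_sum_shifted_def by (rule sum_Omega_last_pos_shift)

lemma inner_sum_shifted_eq_last_zero:
  "inner_sum_shifted \<beta> k m t = (\<Sum>ks\<in>Omega_last_zero (Suc k) (Suc m). normalized_power (weight \<beta> (Suc m) ks) t)"
  unfolding inner_sum_shifted_def by (rule sum_Omega_last_zero_shift)

lemma sums_sol_term_last_pos_part:
  assumes lam: "0 \<le> lam" and \<beta>: "\<And>j. 0 < \<beta> j \<and> \<beta> j \<le> 1" and t: "0 \<le> t"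
  shows "(\<lambda>i. (-lam) ^ (n + i) * (\<Sum>ks\<in>Omega_last_pos (n + i) n. normalized_power (weight \<beta> n ks) t))
           sums (- lam * ((-1) ^ n * RL_int (\<beta> n) (sol lam \<beta> n) t))"
    (is "?a sums _")
proof -
  have "(\<lambda>i. ?a (Suc i)) = (\<lambda>i. - lam * ((-lam) ^ (n + i) * inner_sum_shifted \<beta> (n + i) n t))"
    by (simp add: inner_sum_shifted_eq_last_pos mult.assoc)
  with sums_mult[OF RL_int_sol_series(2)[OF lam \<beta> t], of "- lam"]
  have "(\<lambda>i. ?a (Suc i)) sums (- lam * ((-1) ^ n * RL_int (\<beta> n) (sol lam \<beta> n) t))"
    by simp
  from sums_Suc_iff[of ?a, THEN iffD1, OF this] show ?thesis by (simp add: Omega_last_pos_diag)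
qed

lemma sums_sol_term_last_zero_part:
  assumes lam: "0 \<le> lam" and \<beta>: "\<And>j. 0 < \<beta> j \<and> \<beta> j \<le> 1" and t: "0 \<le> t"
  shows "(\<lambda>i. (-lam) ^ (n + i) * (\<Sum>ks\<in>Omega_last_zero (n + i) n. normalized_power (weight \<beta> n ks) t))
           sums (if n = 0 then 1 else - lam * ((-1) ^ (n - 1) * RL_int (\<beta> (n - 1)) (sol lam \<beta> (n - 1)) t))"
proof (cases n)
  case 0
  then show ?thesis
    using sums_single[of 0 "\<lambda>_. 1::real"]
    by (simp add: Omega_last_zero_0 weight_def normalized_power_0_right if_distrib cong: if_cong)
next
  case (Suc m)
  have "(\<lambda>i. - lam * ((-lam) ^ (m + i) * inner_sum_shifted \<beta> (m + i) m t))
      sums (- lam * ((-1) ^ m * RL_int (\<beta> m) (sol lam \<beta> m) t))"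
    by (rule sums_mult[OF RL_int_sol_series(2)[OF lam \<beta> t]])
  then show ?thesis
    using Suc by (simp add: inner_sum_shifted_eq_last_zero mult.assoc)
qed

lemma sol_satisfies_equation:
  assumes lam: "0 \<le> lam" and \<beta>: "\<And>j. 0 < \<beta> j \<and> \<beta> j \<le> 1" and t: "0 \<le> t"
  shows "sol lam \<beta> n t = sol lam \<beta> n 0 - lam * (RL_int (\<beta> n) (sol lam \<beta> n) t
           - (if n = 0 then 0 else RL_int (\<beta> (n - 1)) (sol lam \<beta> (n - 1)) t))"
proof -
  define A where "A = (\<lambda>i. (-lam) ^ (n + i) * (\<Sum>ks\<in>Omega_last_pos (n + i) n. normalized_power (weight \<beta> n ks) t))"
  define B where "B = (\<lambda>i. (-lam) ^ (n + i) * (\<Sum>ks\<in>Omega_last_zero (n + i) n. normalized_power (weight \<beta> n ks) t))"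
  have "sol_term lam \<beta> n t = (\<lambda>i. A i + B i)"
    by (rule ext) (simp add: A_def B_def sol_term_def inner_sum_eq_sum_normalized_power sum_Omega_split distrib_left)
  then have "sol_term lam \<beta> n t sums (- lam * ((-1) ^ n * RL_int (\<beta> n) (sol lam \<beta> n) t)
      + (if n = 0 then 1 else - lam * ((-1) ^ (n - 1) * RL_int (\<beta> (n - 1)) (sol lam \<beta> (n - 1)) t)))"
    using sums_add[OF sums_sol_term_last_pos_part[where \<beta> = \<beta> and n = n, OF lam \<beta> t, folded A_def]
        sums_sol_term_last_zero_part[where \<beta> = \<beta> and n = n, OF lam \<beta> t, folded B_def]]
    by simp
  then have sol_eq: "sol lam \<beta> n t = (-1) ^ n * (- lam * ((-1) ^ n * RL_int (\<beta> n) (sol lam \<beta> n) t)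
      + (if n = 0 then 1 else - lam * ((-1) ^ (n - 1) * RL_int (\<beta> (n - 1)) (sol lam \<beta> (n - 1)) t)))"
    by (simp add: sol_def sums_iff)
  show ?thesis
  proof (cases n)
    case 0
    then show ?thesis using sol_eq sol_at_0[of \<beta> lam n] \<beta> by simp
  next
    case (Suc m)
    then show ?thesis using sol_eq sol_at_0[of \<beta> lam n] \<beta> by (cases "even m") (simp_all add: algebra_simps)
  qed
qed

lemma solves_sys_sol:
  assumes lam: "0 \<le> lam" and \<beta>: "\<And>j. 0 < \<beta> j \<and> \<beta> j \<le> 1"
  shows "solves_sys lam \<beta> (sol lam \<beta>)"
  unfolding solves_sys_def
  using sol_at_0[where \<beta> = \<beta>] RL_int_sol_series(1)[OF lam \<beta>] sol_satisfies_equation[OF lam \<beta>] \<beta> by auto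

section \<open>Uniqueness\<close>

lemma solves_sysD:
  assumes "solves_sys lam \<beta> p"
  shows "p n 0 = (if n = 0 then 1 else 0)"
    and "0 \<le> t \<Longrightarrow> RL_integrable (\<beta> n) (p n) t"
    and "0 \<le> t \<Longrightarrow> p n t = p n 0 - lam * (RL_int (\<beta> n) (p n) t
           - (if n = 0 then 0 else RL_int (\<beta> (n - 1)) (p (n - 1)) t))"
proof -
  have init: "p 0 0 = 1" "\<forall>n\<ge>1. p n 0 = 0"
    and eq: "\<forall>n t. 0 \<le> t \<longrightarrow> RL_integrable (\<beta> n) (p n) t \<and>
      p n t = p n 0 - lam * (RL_int (\<beta> n) (p n) t - (if n = 0 then 0 else RL_int (\<beta> (n - 1)) (p (n - 1)) t))"
    using assms unfolding solves_sys_def by blast+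
  show "p n 0 = (if n = 0 then 1 else 0)" using init by (cases "n = 0") auto
  show "0 \<le> t \<Longrightarrow> RL_integrable (\<beta> n) (p n) t"
    and "0 \<le> t \<Longrightarrow> p n t = p n 0 - lam * (RL_int (\<beta> n) (p n) t
           - (if n = 0 then 0 else RL_int (\<beta> (n - 1)) (p (n - 1)) t))"
    using eq by blast+
qed

lemma solves_sys_diff_homogeneous:
  assumes p: "solves_sys lam \<beta> p" and p': "solves_sys lam \<beta> p'"
    and prev: "n \<noteq> 0 \<Longrightarrow> \<forall>s\<ge>0. p (n - 1) s = p' (n - 1) s" and t: "0 \<le> t"
  shows "p n t - p' n t = - lam * RL_int (\<beta> n) (\<lambda>s. p n s - p' n s) t"
proof -
  have prev_int: "n \<noteq> 0 \<Longrightarrow> RL_int (\<beta> (n - 1)) (p (n - 1)) t = RL_int (\<beta> (n - 1)) (p' (n - 1)) t"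
    using prev by (intro RL_int_cong) auto
  have "p n t - p' n t = - lam * (RL_int (\<beta> n) (p n) t - RL_int (\<beta> n) (p' n) t)"
    using solves_sysD(3)[OF p t, of n] solves_sysD(3)[OF p' t, of n] prev_int
      solves_sysD(1)[OF p, of n] solves_sysD(1)[OF p', of n]
    by (cases "n = 0") (simp_all add: algebra_simps)
  also have "\<dots> = - lam * RL_int (\<beta> n) (\<lambda>s. p n s - p' n s) t"
    using RL_int_diff[OF solves_sysD(2)[OF p t] solves_sysD(2)[OF p' t]] by simp
  finally show ?thesis .
qed

lemma solves_sys_unique:
  assumes \<beta>: "\<And>j. 0 < \<beta> j" and p: "solves_sys lam \<beta> p" and p': "solves_sys lam \<beta> p'"
    and bdd: "\<And>n T. bounded (p n ` {0..T})" and bdd': "\<And>n T. bounded (p' n ` {0..T})"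
  shows "\<forall>t\<ge>0. p n t = p' n t"
proof -
  have step: "\<forall>T\<ge>0. p n T = p' n T" if prev: "n \<noteq> 0 \<Longrightarrow> \<forall>s\<ge>0. p (n - 1) s = p' (n - 1) s" for n
  proof (intro allI impI)
    fix T :: real assume T: "0 \<le> T"
    obtain B where B: "\<forall>x\<in>p n ` {0..T}. norm x \<le> B" using bdd[of n T] unfolding bounded_iff by blast
    obtain B' where B': "\<forall>x\<in>p' n ` {0..T}. norm x \<le> B'" using bdd'[of n T] unfolding bounded_iff by blast
    have "p n T - p' n T = 0"
    proof (rule RL_homogeneous_eq_zero[where q = "\<lambda>s. p n s - p' n s" and b = "\<beta> n" and M = "B + B'" and lam = lam])
      fix t assume t: "0 \<le> t" "t \<le> T"
      show "\<bar>p n t - p' n t\<bar> \<le> B + B'" using B B' t by force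
      show "RL_integrable (\<beta> n) (\<lambda>s. p n s - p' n s) t"
        using t by (intro RL_integrable_diff solves_sysD(2)[OF p] solves_sysD(2)[OF p'])
      show "p n t - p' n t = - lam * RL_int (\<beta> n) (\<lambda>s. p n s - p' n s) t"
        by (rule solves_sys_diff_homogeneous[OF p p' prev t(1)])
    qed (use \<beta> T in auto)
    then show "p n T = p' n T" by simp
  qed
  show ?thesis
  proof (induction n)
    case 0
    then show ?case using step[of 0] by simp
  next
    case (Suc n)
    then show ?case using step[of "Suc n"] by simp
  qed
qed

theorem theorem4p1:
  fixes lam :: real and \<beta> :: "nat \<Rightarrow> real"
  assumes "lam > 0" and "\<And>n. 0 < \<beta> n \<and> \<beta> n \<le> 1"
  shows "(\<forall>n t. t \<ge> 0 \<longrightarrow> summable (sol_term lam \<beta> n t))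
     \<and> solves_sys lam \<beta> (sol lam \<beta>)
     \<and> (\<forall>p. solves_sys lam \<beta> p \<and> (\<forall>n. continuous_on {0..} (p n))
            \<longrightarrow> (\<forall>n t. t \<ge> 0 \<longrightarrow> p n t = sol lam \<beta> n t))"
proof (intro conjI allI impI)
  have lam: "0 \<le> lam" using assms(1) by simp
  note \<beta> = assms(2)
  show "summable (sol_term lam \<beta> n t)" if "0 \<le> t" for n t
    using summable_sol_term[OF lam \<beta> that] .
  show sol: "solves_sys lam \<beta> (sol lam \<beta>)"
    using solves_sys_sol[OF lam \<beta>] .
  fix p :: "nat \<Rightarrow> real \<Rightarrow> real" and n :: nat and t :: real
  assume p: "solves_sys lam \<beta> p \<and> (\<forall>n. continuous_on {0..} (p n))" and t: "0 \<le> t"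
  have "bounded (p n ` {0..T})" for n T
    using p by (intro compact_imp_bounded compact_continuous_image) (auto intro: continuous_on_subset)
  then have "\<forall>t\<ge>0. p n t = sol lam \<beta> n t"
    using p sol \<beta> by (intro solves_sys_unique bounded_sol_image[where \<beta> = \<beta>, OF lam \<beta>]) auto
  with t show "p n t = sol lam \<beta> n t" by blast
qed

end
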